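(* Let $\Bbbk$ be a field of characteristic zero and $M$ a generalized Coxeter matrix. Then $NC(M)$ is not a bialgebra: there do not exist algebra homomorphisms $\Delta : NC(M) \to NC(M) \otimes NC(M)$ and $\varepsilon : NC(M) \to \Bbbk$ with $(\mathrm{id} \otimes \varepsilon)\circ \Delta = \mathrm{id} = (\varepsilon \otimes \mathrm{id}) \circ \Delta$.
   Context: A generalized Coxeter matrix is a symmetric matrix $M = (m_{ij})_{i,j \in I}$ with $I$ finite, $m_{ij} \in \{2,3,\dots\} \cup \{\infty\}$ for $i \neq j$, and $m_{ii} \in \{2,3,\dots\}$ (finite) for all $i$. For a commutative unital ring $\Bbbk$, the generalized nil-Coxeter algebra is $NC(M) := \Bbbk\langle T_i : i \in I\rangle / (\text{braid relations } \underbrace{T_iT_jT_i\cdots}_{m_{ij}} = \underbrace{T_jT_iT_j\cdots}_{m_{ij}} \text{ for } i\neq j,\ m_{ij}<\infty;\ T_i^{m_{ii}} = 0 \ \forall i)$. *)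

theory Defs
  imports Main "HOL-Library.Extended_Nat" "HOL-Library.Function_Algebras"
begin

definition gen_coxeter :: "('i \<Rightarrow> 'i \<Rightarrow> enat) \<Rightarrow> bool" where
  "gen_coxeter M \<longleftrightarrow> (\<forall>i j. M i j = M j i) \<and> (\<forall>i j. M i j \<ge> 2) \<and> (\<forall>i. M i i \<noteq> \<infinity>)"

text \<open>Free algebra k<T_i : i in I>: finitely supported functions on words.\<close>
definition ncpoly :: "('i list \<Rightarrow> 'k::field) set" where
  "ncpoly = {f. finite {w. f w \<noteq> 0}}"

definition ncmon :: "'i list \<Rightarrow> 'i list \<Rightarrow> 'k::field" where
  "ncmon w = (\<lambda>u. if u = w then 1 else 0)"

definition ncone :: "'i list \<Rightarrow> 'k::field" where
  "ncone = ncmon []"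

definition ncmul :: "('i list \<Rightarrow> 'k::field) \<Rightarrow> ('i list \<Rightarrow> 'k) \<Rightarrow> 'i list \<Rightarrow> 'k" where
  "ncmul f g = (\<lambda>w. \<Sum>n\<le>length w. f (take n w) * g (drop n w))"

definition ncsmult :: "'k::field \<Rightarrow> ('a \<Rightarrow> 'k) \<Rightarrow> 'a \<Rightarrow> 'k" where
  "ncsmult c f = (\<lambda>w. c * f w)"

definition alt_word :: "'i \<Rightarrow> 'i \<Rightarrow> nat \<Rightarrow> 'i list" where
  "alt_word i j m = map (\<lambda>k. if even k then i else j) [0..<m]"

definition nc_rels :: "('i \<Rightarrow> 'i \<Rightarrow> enat) \<Rightarrow> ('i list \<Rightarrow> 'k::field) set" where
  "nc_rels M =
     {ncmon (alt_word i j m) - ncmon (alt_word j i m) | i j m. i \<noteq> j \<and> M i j = enat m}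
   \<union> {ncmon (replicate m i) | i m. M i i = enat m}"

inductive_set nc_ideal :: "('i list \<Rightarrow> 'k::field) set \<Rightarrow> ('i list \<Rightarrow> 'k) set"
  for R where
  zero: "0 \<in> nc_ideal R"
| gen: "r \<in> R \<Longrightarrow> a \<in> ncpoly \<Longrightarrow> b \<in> ncpoly \<Longrightarrow> ncmul (ncmul a r) b \<in> nc_ideal R"
| add: "x \<in> nc_ideal R \<Longrightarrow> y \<in> nc_ideal R \<Longrightarrow> x + y \<in> nc_ideal R"
| smult: "x \<in> nc_ideal R \<Longrightarrow> ncsmult c x \<in> nc_ideal R"

text \<open>The tensor square F \<otimes> F of the free algebra: finitely supported functions on pairs
  of words, with multiplication (u\<otimes>v)(u'\<otimes>v') = uu' \<otimes> vv'.\<close>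
definition ncpoly2 :: "('i list \<times> 'i list \<Rightarrow> 'k::field) set" where
  "ncpoly2 = {X. finite {p. X p \<noteq> 0}}"

definition tens :: "('i list \<Rightarrow> 'k::field) \<Rightarrow> ('i list \<Rightarrow> 'k) \<Rightarrow> 'i list \<times> 'i list \<Rightarrow> 'k" where
  "tens f g = (\<lambda>(u, v). f u * g v)"

definition tone :: "'i list \<times> 'i list \<Rightarrow> 'k::field" where
  "tone = tens ncone ncone"

definition tmul :: "('i list \<times> 'i list \<Rightarrow> 'k::field) \<Rightarrow> ('i list \<times> 'i list \<Rightarrow> 'k)
                     \<Rightarrow> 'i list \<times> 'i list \<Rightarrow> 'k" where
  "tmul X Y = (\<lambda>(u, v). \<Sum>n\<le>length u. \<Sum>m\<le>length v.
        X (take n u, take m v) * Y (drop n u, drop m v))"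

text \<open>The kernel J \<otimes> F + F \<otimes> J of F \<otimes> F \<rightarrow> NC(M) \<otimes> NC(M).\<close>
inductive_set tens_ker :: "('i list \<Rightarrow> 'k::field) set \<Rightarrow> ('i list \<times> 'i list \<Rightarrow> 'k) set"
  for J where
  zero: "0 \<in> tens_ker J"
| left: "f \<in> J \<Longrightarrow> g \<in> ncpoly \<Longrightarrow> tens f g \<in> tens_ker J"
| right: "f \<in> ncpoly \<Longrightarrow> g \<in> J \<Longrightarrow> tens f g \<in> tens_ker J"
| add: "X \<in> tens_ker J \<Longrightarrow> Y \<in> tens_ker J \<Longrightarrow> X + Y \<in> tens_ker J"
| smult: "X \<in> tens_ker J \<Longrightarrow> ncsmult c X \<in> tens_ker J"

definition id_eps :: "(('i list \<Rightarrow> 'k::field) \<Rightarrow> 'k) \<Rightarrow> ('i list \<times> 'i list \<Rightarrow> 'k) \<Rightarrow> 'i list \<Rightarrow> 'k" where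
  "id_eps e X = (\<lambda>u. \<Sum>v\<in>{v. X (u, v) \<noteq> 0}. X (u, v) * e (ncmon v))"

definition eps_id :: "(('i list \<Rightarrow> 'k::field) \<Rightarrow> 'k) \<Rightarrow> ('i list \<times> 'i list \<Rightarrow> 'k) \<Rightarrow> 'i list \<Rightarrow> 'k" where
  "eps_id e X = (\<lambda>v. \<Sum>u\<in>{u. X (u, v) \<noteq> 0}. e (ncmon u) * X (u, v))"

text \<open>\<epsilon> : NC(M) \<rightarrow> k a unital algebra homomorphism, given on representatives
  (a function on F vanishing on the ideal J).\<close>
definition nc_counit_hom :: "('i \<Rightarrow> 'i \<Rightarrow> enat) \<Rightarrow> (('i list \<Rightarrow> 'k::field) \<Rightarrow> 'k) \<Rightarrow> bool" where
  "nc_counit_hom M e \<longleftrightarrow>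
     (\<forall>x\<in>nc_ideal (nc_rels M). e x = 0) \<and>
     (\<forall>x\<in>ncpoly. \<forall>y\<in>ncpoly. e (x + y) = e x + e y) \<and>
     (\<forall>x\<in>ncpoly. \<forall>c. e (ncsmult c x) = c * e x) \<and>
     (\<forall>x\<in>ncpoly. \<forall>y\<in>ncpoly. e (ncmul x y) = e x * e y) \<and>
     e ncone = 1"

text \<open>\<Delta> : NC(M) \<rightarrow> NC(M) \<otimes> NC(M) a unital algebra homomorphism, given on
  representatives: a map F \<rightarrow> F \<otimes> F that is well defined, linear, multiplicative
  and unital modulo the respective kernels.\<close>
definition nc_coprod_hom :: "('i \<Rightarrow> 'i \<Rightarrow> enat) \<Rightarrow> (('i list \<Rightarrow> 'k::field) \<Rightarrow> ('i list \<times> 'i list \<Rightarrow> 'k)) \<Rightarrow> bool" where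
  "nc_coprod_hom M D \<longleftrightarrow>
     (let J = nc_ideal (nc_rels M); K = tens_ker J in
     (\<forall>x\<in>ncpoly. D x \<in> ncpoly2) \<and>
     (\<forall>x\<in>ncpoly. \<forall>y\<in>ncpoly. x - y \<in> J \<longrightarrow> D x - D y \<in> K) \<and>
     (\<forall>x\<in>ncpoly. \<forall>y\<in>ncpoly. D (x + y) - (D x + D y) \<in> K) \<and>
     (\<forall>x\<in>ncpoly. \<forall>c. D (ncsmult c x) - ncsmult c (D x) \<in> K) \<and>
     (\<forall>x\<in>ncpoly. \<forall>y\<in>ncpoly. D (ncmul x y) - tmul (D x) (D y) \<in> K) \<and>
     D ncone - tone \<in> K)"

definition nc_counit_law :: "('i \<Rightarrow> 'i \<Rightarrow> enat) \<Rightarrow> (('i list \<Rightarrow> 'k::field) \<Rightarrow> ('i list \<times> 'i list \<Rightarrow> 'k))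
                              \<Rightarrow> (('i list \<Rightarrow> 'k) \<Rightarrow> 'k) \<Rightarrow> bool" where
  "nc_counit_law M D e \<longleftrightarrow>
     (\<forall>x\<in>ncpoly. id_eps e (D x) - x \<in> nc_ideal (nc_rels M) \<and>
                 eps_id e (D x) - x \<in> nc_ideal (nc_rels M))"

end

theory Submission
  imports Defs
begin

text \<open>Fix a generator \<open>T = T\<^sub>i\<close> and put \<open>m = m\<^sub>i\<^sub>i \<ge> 2\<close>. The coefficients of an element at the
  words \<open>T\<^sup>p\<close> with \<open>p < m\<close> do not see the defining relations, and those of a product only involve
  those of the factors; so these coefficients of \<open>\<Delta>\<close> and \<open>\<epsilon>\<close> can be computed in \<open>k[x]/(x\<^sup>m)\<close> and
  \<open>k[x,y]/(x\<^sup>m,y\<^sup>m)\<close>. As \<open>T\<close> is nilpotent, \<open>\<epsilon>(T) = 0\<close>, and the counit law then gives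
  \<open>\<Delta>(T) = x + y g(x)\<close> modulo \<open>y\<^sup>2\<close> with \<open>g(0) = 1\<close>. So \<open>\<Delta>(T\<^sup>m) = \<Delta>(T)\<^sup>m\<close> has coefficient \<open>m\<close> at
  \<open>x\<^sup>m\<^sup>-\<^sup>1 y\<close>, whereas \<open>T\<^sup>m = 0\<close>; hence \<open>m = 0\<close> in \<open>k\<close>.\<close>

lemma ncmul_replicate:
  "ncmul f g (replicate n x) = (\<Sum>k\<le>n. f (replicate k x) * g (replicate (n - k) x))"
  unfolding ncmul_def by (auto intro!: sum.cong simp: min_def)

lemma tmul_replicate:
  "tmul X Y (replicate p x, replicate q x) =
   (\<Sum>k\<le>p. \<Sum>l\<le>q. X (replicate k x, replicate l x) * Y (replicate (p - k) x, replicate (q - l) x))"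
  unfolding tmul_def by (auto intro!: sum.cong simp: min_def)

lemma ncmul_ncmon: "ncmul (ncmon u) (ncmon v) = (ncmon (u @ v) :: _ \<Rightarrow> 'k::field)"
proof
  fix w
  have "ncmul (ncmon u) (ncmon v) w
      = (\<Sum>n\<le>length w. if n = length u then ncmon (u @ v) w else (0::'k))"
    unfolding ncmul_def
  proof (intro sum.cong refl)
    fix n assume "n \<in> {..length w}"
    then have "n \<le> length w" by simp
    then have split: "take n w = u \<and> drop n w = v \<longleftrightarrow> n = length u \<and> w = u @ v"
      by (metis append_eq_conv_conj append_take_drop_id length_take min.absorb2)
    show "ncmon u (take n w) * ncmon v (drop n w) =
        (if n = length u then ncmon (u @ v) w else 0)"
      by (cases "take n w = u \<and> drop n w = v") (use split in \<open>auto simp: ncmon_def\<close>)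
  qed
  also have "\<dots> = ncmon (u @ v) w"
    by (auto simp: ncmon_def)
  finally show "ncmul (ncmon u) (ncmon v) w = (ncmon (u @ v) w :: 'k)" .
qed

lemma ncmon_apply: "ncmon w u = (if u = w then 1 else 0)"
  by (simp add: ncmon_def)

lemma ncmul_ncone_left: "ncmul ncone r = (r :: _ \<Rightarrow> 'k::field)"
proof
  fix w
  have "ncmul ncone r w = (\<Sum>n\<le>length w. if n = 0 then r w else (0::'k))"
    unfolding ncmul_def ncone_def ncmon_def by (intro sum.cong) auto
  then show "ncmul ncone r w = r w" by simp
qed

lemma ncmul_ncone_right: "ncmul r ncone = (r :: _ \<Rightarrow> 'k::field)"
proof
  fix w
  have "ncmul r ncone w = (\<Sum>n\<le>length w. if n = length w then r w else (0::'k))"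
    unfolding ncmul_def ncone_def ncmon_def by (intro sum.cong) auto
  then show "ncmul r ncone w = r w" by simp
qed

lemma ncmon_in_ncpoly: "ncmon w \<in> ncpoly"
  unfolding ncpoly_def ncmon_def by simp

lemma ncone_in_ncpoly: "ncone \<in> ncpoly"
  unfolding ncone_def by (rule ncmon_in_ncpoly)

lemma id_eps_eq:
  assumes X: "X \<in> ncpoly2" and e: "\<And>w. e (ncmon w) = (if w = [] then 1 else (0::'k::field))"
  shows "id_eps e X u = X (u, [])"
proof -
  have "finite (Pair u -` {p. X p \<noteq> 0})"
    using X by (intro finite_vimageI) (auto simp: ncpoly2_def inj_on_def)
  then have fin: "finite {v. X (u, v) \<noteq> 0}"
    by (simp add: vimage_def)
  have "id_eps e X u = (\<Sum>v\<in>{v. X (u, v) \<noteq> 0}. if v = [] then X (u, v) else 0)"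
    unfolding id_eps_def by (intro sum.cong) (auto simp: e)
  also have "\<dots> = X (u, [])"
    using fin by (simp add: sum.delta)
  finally show ?thesis .
qed

lemma eps_id_eq:
  assumes X: "X \<in> ncpoly2" and e: "\<And>w. e (ncmon w) = (if w = [] then 1 else (0::'k::field))"
  shows "eps_id e X v = X ([], v)"
proof -
  have "finite ((\<lambda>u. (u, v)) -` {p. X p \<noteq> 0})"
    using X by (intro finite_vimageI) (auto simp: ncpoly2_def inj_on_def)
  then have fin: "finite {u. X (u, v) \<noteq> 0}"
    by (simp add: vimage_def)
  have "eps_id e X v = (\<Sum>u\<in>{u. X (u, v) \<noteq> 0}. if u = [] then X (u, v) else 0)"
    unfolding eps_id_def by (intro sum.cong) (auto simp: e)
  also have "\<dots> = X ([], v)"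
    using fin by (simp add: sum.delta)
  finally show ?thesis .
qed

lemma gen_coxeter_ge_2: "gen_coxeter M \<Longrightarrow> M a b = enat k \<Longrightarrow> 2 \<le> k"
  unfolding gen_coxeter_def by (metis enat_ord_simps(1) numeral_eq_enat)

lemma gen_coxeter_diag_finite:
  assumes "gen_coxeter M" obtains m where "M i i = enat m"
  using assms unfolding gen_coxeter_def by (metis not_infinity_eq)

lemma alt_word_nth: "k < m \<Longrightarrow> alt_word a b m ! k = (if even k then a else b)"
  unfolding alt_word_def by simp

lemma replicate_ne_alt_word:
  assumes "a \<noteq> b" "2 \<le> k" shows "replicate s x \<noteq> alt_word a b k"
proof
  assume eq: "replicate s x = alt_word a b k"
  from arg_cong[OF this, of length] have "s = k" by (simp add: alt_word_def)
  have "x = replicate s x ! 0" "x = replicate s x ! 1"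
    using \<open>s = k\<close> assms(2) by simp_all
  with eq assms show False by (simp add: alt_word_nth)
qed

lemma nc_rels_replicate_eq_0:
  assumes cox: "gen_coxeter M" and Mi: "M i i = enat m" and r: "r \<in> nc_rels M" and "s < m"
  shows "r (replicate s i) = (0::'k::field)"
proof -
  from r consider (braid) a b k
      where "r = ncmon (alt_word a b k) - ncmon (alt_word b a k)" "a \<noteq> b" "M a b = enat k"
    | (nil) a k where "r = ncmon (replicate k a)" "M a a = enat k"
    unfolding nc_rels_def by blast
  then show ?thesis
  proof cases
    case braid
    then have "replicate s i \<noteq> alt_word a b k" "replicate s i \<noteq> alt_word b a k"
      using replicate_ne_alt_word gen_coxeter_ge_2[OF cox] by metis+
    then show ?thesis by (simp add: braid ncmon_def)
  next
    case nil
    have "replicate s i \<noteq> replicate k a"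
    proof
      assume eq: "replicate s i = replicate k a"
      then have "s = k" by (metis length_replicate)
      with eq have "a = i" using gen_coxeter_ge_2[OF cox nil(2)]
        by (metis Suc_1 Suc_le_lessD nth_replicate)
      with Mi nil(2) \<open>s = k\<close> \<open>s < m\<close> show False by simp
    qed
    then show ?thesis by (simp add: nil ncmon_def)
  qed
qed

lemma nc_ideal_replicate_eq_0:
  assumes cox: "gen_coxeter M" and Mi: "M i i = enat m"
  shows "f \<in> nc_ideal (nc_rels M) \<Longrightarrow> n < m \<Longrightarrow> f (replicate n i) = (0::'k::field)"
proof (induction arbitrary: n rule: nc_ideal.induct)
  case (gen r a b)
  have "ncmul (ncmul a r) b (replicate n i)
      = (\<Sum>k\<le>n. (\<Sum>l\<le>k. a (replicate l i) * r (replicate (k - l) i)) * b (replicate (n - k) i))"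
    by (simp add: ncmul_replicate)
  also have "\<dots> = 0"
    using gen by (auto intro!: sum.neutral simp: nc_rels_replicate_eq_0[OF cox Mi])
  finally show ?case .
qed (simp_all add: ncsmult_def)

lemma tens_ker_replicate_eq_0:
  assumes cox: "gen_coxeter M" and Mi: "M i i = enat m"
  shows "X \<in> tens_ker (nc_ideal (nc_rels M)) \<Longrightarrow> p < m \<Longrightarrow> q < m
    \<Longrightarrow> X (replicate p i, replicate q i) = (0::'k::field)"
  by (induction rule: tens_ker.induct)
    (simp_all add: tens_def ncsmult_def nc_ideal_replicate_eq_0[OF cox Mi])

lemma ncmon_replicate_in_nc_ideal:
  assumes "M a a = enat k"
  shows "ncmon (replicate k a) \<in> nc_ideal (nc_rels M)"
proof -
  have "ncmon (replicate k a) \<in> nc_rels M"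
    using assms unfolding nc_rels_def by blast
  from nc_ideal.gen[OF this ncone_in_ncpoly ncone_in_ncpoly] show ?thesis
    by (simp add: ncmul_ncone_left ncmul_ncone_right)
qed

text \<open>Every generator is nilpotent, so the counit kills it.\<close>

lemma counit_ncmon:
  assumes cox: "gen_coxeter M" and e: "nc_counit_hom M e"
  shows "e (ncmon w) = (if w = [] then 1 else (0::'k::field))"
proof -
  have e_J: "\<And>x. x \<in> nc_ideal (nc_rels M) \<Longrightarrow> e x = 0"
    and e_mult: "\<And>x y. x \<in> ncpoly \<Longrightarrow> y \<in> ncpoly \<Longrightarrow> e (ncmul x y) = e x * e y"
    and e_one: "e ncone = 1"
    using e unfolding nc_counit_hom_def by auto
  have e_cons: "e (ncmon (a # u)) = e (ncmon [a]) * e (ncmon u)" for a u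
    using e_mult[OF ncmon_in_ncpoly ncmon_in_ncpoly, of "[a]" u] by (simp add: ncmul_ncmon)
  have e_replicate: "e (ncmon (replicate k a)) = e (ncmon [a]) ^ k" for k a
  proof (induction k)
    case (Suc k)
    then show ?case using e_cons[of a "replicate k a"] by simp
  qed (simp add: e_one[unfolded ncone_def])
  have e_generator: "e (ncmon [a]) = 0" for a
  proof -
    obtain k where k: "M a a = enat k" using gen_coxeter_diag_finite[OF cox] .
    have "e (ncmon [a]) ^ k = 0"
      using e_J[OF ncmon_replicate_in_nc_ideal[of M a k, OF k]] by (simp add: e_replicate)
    moreover have "k \<noteq> 0" using gen_coxeter_ge_2[OF cox k] by simp
    ultimately show ?thesis by simp
  qed
  show ?thesis
  proof (cases w)
    case (Cons a u)
    then show ?thesis using e_cons[of a u] e_generator[of a] by simp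
  qed (simp add: e_one[unfolded ncone_def])
qed

text \<open>\<open>Z p q\<close> and \<open>P n p q\<close> are the coefficients of \<open>x\<^sup>p y\<^sup>q\<close> in \<open>Z\<close> and in \<open>P\<^sub>n = Z\<^sup>n\<close>, computed in
  \<open>k[x,y]/(x\<^sup>m, y\<^sup>2)\<close>: from \<open>Z = x + y g(x)\<close> one gets \<open>Z\<^sup>n = x\<^sup>n + n x\<^sup>n\<^sup>-\<^sup>1 y g(x)\<close>.\<close>

lemma truncated_power_coeffs:
  fixes Z :: "nat \<Rightarrow> nat \<Rightarrow> 'a::comm_ring_1" and P :: "nat \<Rightarrow> nat \<Rightarrow> nat \<Rightarrow> 'a"
  assumes Z_y0: "\<And>p. p < m \<Longrightarrow> Z p 0 = (if p = 1 then 1 else 0)"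
    and P_0: "\<And>p q. p < m \<Longrightarrow> q \<le> 1 \<Longrightarrow> P 0 p q = (if p = 0 \<and> q = 0 then 1 else 0)"
    and P_Suc: "\<And>n p q. p < m \<Longrightarrow> q \<le> 1 \<Longrightarrow>
      P (Suc n) p q = (\<Sum>k\<le>p. \<Sum>l\<le>q. Z k l * P n (p - k) (q - l))"
  shows "p < m \<Longrightarrow> P n p 0 = (if p = n then 1 else 0) \<and>
    P n p 1 = of_nat n * (if n \<le> p + 1 then Z (p + 1 - n) 1 else 0)"
proof (induction n arbitrary: p)
  case 0
  then show ?case using P_0 by simp
next
  case (Suc n)
  have IH: "\<And>p'. p' \<le> p \<Longrightarrow> P n p' 0 = (if p' = n then 1 else 0) \<and>
      P n p' 1 = of_nat n * (if n \<le> p' + 1 then Z (p' + 1 - n) 1 else 0)"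
    using Suc by simp
  have "P (Suc n) p 0 = (\<Sum>k\<le>p. Z k 0 * P n (p - k) 0)"
    using P_Suc[OF Suc.prems] by simp
  also have "\<dots> = (\<Sum>k\<le>p. if k = 1 then (if p - 1 = n then 1 else 0) else 0)"
    using IH Suc.prems by (intro sum.cong) (auto simp: Z_y0)
  also have "\<dots> = (if p = Suc n then 1 else 0)"
    by auto
  finally have y0: "P (Suc n) p 0 = (if p = Suc n then 1 else 0)" .
  have "P (Suc n) p 1 = (\<Sum>k\<le>p. Z k 0 * P n (p - k) 1) + (\<Sum>k\<le>p. Z k 1 * P n (p - k) 0)"
    using P_Suc[OF Suc.prems] by (simp add: sum.distrib numeral_2_eq_2 atMost_Suc)
  also have "(\<Sum>k\<le>p. Z k 0 * P n (p - k) 1) = (\<Sum>k\<le>p. if k = 1 then P n (p - 1) 1 else 0)"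
    using Suc.prems by (intro sum.cong) (auto simp: Z_y0)
  also have "(\<Sum>k\<le>p. Z k 1 * P n (p - k) 0) =
      (\<Sum>k\<le>p. if k = p - n then (if n \<le> p then Z k 1 else 0) else 0)"
    using IH by (intro sum.cong) auto
  finally have "P (Suc n) p 1 =
      (if 1 \<le> p then P n (p - 1) 1 else 0) + (if n \<le> p then Z (p - n) 1 else 0)"
    by simp
  then have y1: "P (Suc n) p 1 =
      of_nat (Suc n) * (if Suc n \<le> p + 1 then Z (p + 1 - Suc n) 1 else 0)"
    using IH[of "p - 1"] by (cases "p = 0") (auto simp: algebra_simps)
  from y0 y1 show ?case ..
qed

lemma nc_coprod_homD:
  assumes "nc_coprod_hom M D"
  shows nc_coprod_hom_ncpoly2: "x \<in> ncpoly \<Longrightarrow> D x \<in> ncpoly2"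
    and nc_coprod_hom_cong: "x \<in> ncpoly \<Longrightarrow> y \<in> ncpoly \<Longrightarrow> x - y \<in> nc_ideal (nc_rels M)
      \<Longrightarrow> D x - D y \<in> tens_ker (nc_ideal (nc_rels M))"
    and nc_coprod_hom_add: "x \<in> ncpoly \<Longrightarrow> y \<in> ncpoly
      \<Longrightarrow> D (x + y) - (D x + D y) \<in> tens_ker (nc_ideal (nc_rels M))"
    and nc_coprod_hom_mult: "x \<in> ncpoly \<Longrightarrow> y \<in> ncpoly
      \<Longrightarrow> D (ncmul x y) - tmul (D x) (D y) \<in> tens_ker (nc_ideal (nc_rels M))"
    and nc_coprod_hom_one: "D ncone - tone \<in> tens_ker (nc_ideal (nc_rels M))"
  using assms unfolding nc_coprod_hom_def Let_def by simp_all

context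
  fixes M :: "'i \<Rightarrow> 'i \<Rightarrow> enat" and i :: 'i and m :: nat
    and D :: "('i list \<Rightarrow> 'k::field) \<Rightarrow> ('i list \<times> 'i list \<Rightarrow> 'k)"
  assumes cox: "gen_coxeter M" and M_ii: "M i i = enat m" and D: "nc_coprod_hom M D"
begin

private abbreviation (input) K where "K \<equiv> tens_ker (nc_ideal (nc_rels M))"

lemma coprod_coeff_ncone:
  assumes "p < m" "q < m"
  shows "D ncone (replicate p i, replicate q i) = (if p = 0 \<and> q = 0 then 1 else 0)"
proof -
  from tens_ker_replicate_eq_0[OF cox M_ii nc_coprod_hom_one[OF D] assms] show ?thesis
    by (simp add: tone_def tens_def ncone_def ncmon_def)
qed

lemma coprod_coeff_replicate_Suc:
  assumes "p < m" "q < m"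
  shows "D (ncmon (replicate (Suc n) i)) (replicate p i, replicate q i) =
    (\<Sum>k\<le>p. \<Sum>l\<le>q. D (ncmon [i]) (replicate k i, replicate l i) *
      D (ncmon (replicate n i)) (replicate (p - k) i, replicate (q - l) i))"
proof -
  have "D (ncmul (ncmon [i]) (ncmon (replicate n i)))
      - tmul (D (ncmon [i])) (D (ncmon (replicate n i))) \<in> K"
    by (rule nc_coprod_hom_mult[OF D ncmon_in_ncpoly ncmon_in_ncpoly])
  then have "D (ncmon (replicate (Suc n) i))
      - tmul (D (ncmon [i])) (D (ncmon (replicate n i))) \<in> K"
    by (simp add: ncmul_ncmon)
  from tens_ker_replicate_eq_0[OF cox M_ii this assms] show ?thesis
    by (simp add: tmul_replicate)
qed

text \<open>\<open>\<Delta>\<close> is only defined modulo the kernel, so \<open>\<Delta> 0\<close> need not vanish; it is killed using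
  \<open>\<Delta>(0 + 0) - 2\<Delta>(0) \<in> K\<close>.\<close>

lemma coprod_coeff_replicate_m:
  assumes "p < m" "q < m"
  shows "D (ncmon (replicate m i)) (replicate p i, replicate q i) = 0"
proof -
  have zero: "0 \<in> ncpoly" unfolding ncpoly_def by simp
  have "D (ncmon (replicate m i)) - D 0 \<in> K"
    using ncmon_replicate_in_nc_ideal[of M i m, OF M_ii]
    by (intro nc_coprod_hom_cong[OF D ncmon_in_ncpoly zero]) simp
  from tens_ker_replicate_eq_0[OF cox M_ii this assms]
    tens_ker_replicate_eq_0[OF cox M_ii nc_coprod_hom_add[OF D zero zero] assms]
  show ?thesis by simp
qed

lemma counit_law_coeffs:
  assumes e: "nc_counit_hom M e" and law: "nc_counit_law M D e"
  shows "\<And>p. p < m \<Longrightarrow> D (ncmon [i]) (replicate p i, []) = (if p = 1 then 1 else 0)"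
    and "D (ncmon [i]) ([], [i]) = 1"
proof -
  have D_ncpoly2: "D (ncmon [i]) \<in> ncpoly2"
    using nc_coprod_hom_ncpoly2[OF D ncmon_in_ncpoly] .
  have id_eps: "id_eps e (D (ncmon [i])) - ncmon [i] \<in> nc_ideal (nc_rels M)"
    and eps_id: "eps_id e (D (ncmon [i])) - ncmon [i] \<in> nc_ideal (nc_rels M)"
    using law ncmon_in_ncpoly unfolding nc_counit_law_def by blast+
  note e_ncmon = counit_ncmon[OF cox e]
  show "D (ncmon [i]) (replicate p i, []) = (if p = 1 then 1 else 0)" if "p < m" for p
    using nc_ideal_replicate_eq_0[OF cox M_ii id_eps that]
    by (cases p) (auto simp: id_eps_eq[OF D_ncpoly2 e_ncmon] ncmon_apply)
  have "1 < m" using gen_coxeter_ge_2[OF cox M_ii] by simp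
  from nc_ideal_replicate_eq_0[OF cox M_ii eps_id this] show "D (ncmon [i]) ([], [i]) = 1"
    by (simp add: eps_id_eq[OF D_ncpoly2 e_ncmon] ncmon_apply)
qed

lemma counit_coprod_of_nat_eq_0:
  assumes e: "nc_counit_hom M e" and law: "nc_counit_law M D e"
  shows "of_nat m = (0::'k)"
proof -
  define Z where "Z p q = D (ncmon [i]) (replicate p i, replicate q i)" for p q
  define P where "P n p q = D (ncmon (replicate n i)) (replicate p i, replicate q i)" for n p q
  have m: "1 < m" "m - 1 < m" using gen_coxeter_ge_2[OF cox M_ii] by auto
  have Z_y0: "Z p 0 = (if p = 1 then 1 else 0)" if "p < m" for p
    using counit_law_coeffs(1)[OF e law that] by (simp add: Z_def)
  have P_0: "P 0 p q = (if p = 0 \<and> q = 0 then 1 else 0)" if "p < m" "q \<le> 1" for p q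
    using coprod_coeff_ncone[of p q] that m by (simp add: P_def ncone_def)
  have P_Suc: "P (Suc n) p q = (\<Sum>k\<le>p. \<Sum>l\<le>q. Z k l * P n (p - k) (q - l))"
    if "p < m" "q \<le> 1" for n p q
    using coprod_coeff_replicate_Suc[of p q n] that m unfolding P_def Z_def by simp
  have "P m (m - 1) 1 = of_nat m * Z 0 1"
    using truncated_power_coeffs[of m Z P, OF Z_y0 P_0 P_Suc m(2), of m] m(1) by simp
  moreover have "P m (m - 1) 1 = 0"
    using coprod_coeff_replicate_m[OF m(2,1)] by (simp add: P_def)
  moreover have "Z 0 1 = 1"
    using counit_law_coeffs(2)[OF e law] by (simp add: Z_def)
  ultimately show ?thesis by simp
qed

end

theorem proposition3p1:
  fixes M :: "'i::finite \<Rightarrow> 'i \<Rightarrow> enat"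
  assumes "gen_coxeter M"
  shows "\<not> (\<exists>(D :: ('i list \<Rightarrow> 'k::field_char_0) \<Rightarrow> ('i list \<times> 'i list \<Rightarrow> 'k))
               (e :: ('i list \<Rightarrow> 'k) \<Rightarrow> 'k).
             nc_coprod_hom M D \<and> nc_counit_hom M e \<and> nc_counit_law M D e)"
proof
  assume "\<exists>(D :: ('i list \<Rightarrow> 'k) \<Rightarrow> ('i list \<times> 'i list \<Rightarrow> 'k)) e.
    nc_coprod_hom M D \<and> nc_counit_hom M e \<and> nc_counit_law M D e"
  then obtain D :: "('i list \<Rightarrow> 'k) \<Rightarrow> ('i list \<times> 'i list \<Rightarrow> 'k)" and e
    where "nc_coprod_hom M D" "nc_counit_hom M e" "nc_counit_law M D e"
    by blast
  obtain m where M_ii: "M undefined undefined = enat m"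
    using gen_coxeter_diag_finite[OF assms] .
  have "of_nat m = (0::'k)"
    by (rule counit_coprod_of_nat_eq_0) fact+
  moreover have "m \<noteq> 0"
    using gen_coxeter_ge_2[OF assms M_ii] by simp
  ultimately show False by simp
qed

end
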